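(* Let $W$ be a finite set with $w\ge 1$ elements and let $\mathcal G=\{G_1,\dots,G_h\}$ be a family of nonempty subsets of $W$. For $k\in\{0,1,\dots,w\}$ let $\tau_k$ be the number of $k$-element transversals of $\mathcal G$ and $q_k=\tau_k/\binom{w}{k}$. Draw elements of $W$ independently and uniformly at random with replacement, and let $T$ be the smallest $n$ such that the set of elements drawn in the first $n$ draws is a transversal of $\mathcal G$. Then $$\mathbb E[T]=w\sum_{k=0}^{w-1}\frac{1-q_k}{w-k}=w\Big(H(w)-\sum_{k=1}^{w-1}\frac{q_k}{w-k}\Big)=wH(w)-\sum_{k=1}^{w-1}\frac{\tau_k}{\binom{w-1}{k}},$$ where $H(w)=1+\frac12+\cdots+\frac1w$.
   Context: A set $X\subseteq W$ is a transversal of $\mathcal G$ if $X\cap G_i\neq\emptyset$ for all $i\in\{1,\dots,h\}$. Note $q_k$ equals the probability that $k$ elements drawn uniformly at random without replacement from $W$ form a transversal; $q_0=0$ and $q_w=1$. *)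

theory Defs
  imports "HOL-Probability.Probability"
begin

definition is_transversal :: "'a set \<Rightarrow> (nat \<Rightarrow> 'a set) \<Rightarrow> nat \<Rightarrow> 'a set \<Rightarrow> bool" where
  "is_transversal W G h X \<longleftrightarrow> X \<subseteq> W \<and> (\<forall>i\<in>{1..h}. X \<inter> G i \<noteq> {})"

definition tau :: "'a set \<Rightarrow> (nat \<Rightarrow> 'a set) \<Rightarrow> nat \<Rightarrow> nat \<Rightarrow> nat" where
  "tau W G h k = card {X. is_transversal W G h X \<and> card X = k}"

definition qprob :: "'a set \<Rightarrow> (nat \<Rightarrow> 'a set) \<Rightarrow> nat \<Rightarrow> nat \<Rightarrow> real" where
  "qprob W G h k = real (tau W G h k) / real (card W choose k)"

definition draws :: "'a set \<Rightarrow> 'a stream measure" where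
  "draws W = stream_space (measure_pmf (pmf_of_set W))"

definition hitting_time :: "'a set \<Rightarrow> (nat \<Rightarrow> 'a set) \<Rightarrow> nat \<Rightarrow> 'a stream \<Rightarrow> ennreal" where
  "hitting_time W G h \<omega> =
     (if \<exists>n. is_transversal W G h (set (stake n \<omega>))
      then of_nat (LEAST n. is_transversal W G h (set (stake n \<omega>)))
      else \<infinity>)"

end

theory Submission
  imports Defs
begin

text \<open>
  Write w = |W| and let T be the hitting time.  By the tail-sum formula,
  E[T] = sum over n of P(T > n), and T > n holds iff the set of the first n draws is a
  non-transversal.  Hence E[T] = sum over non-transversals S of sum over n of
  P(the first n draws have image exactly S).  This probability depends only on k = |S| and
  satisfies the recursion p(n+1,k) = k/w (p(n,k) + p(n,k-1)); summing it over n gives the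
  closed form w / ((w-k) C(w,k)).  Counting the non-transversals of each size k as
  C(w,k) - tau_k yields E[T] = w sum_{k<w} (1 - q_k)/(w - k), and the other two forms
  follow by elementary algebra.
\<close>

text \<open>Fix a k-subset S of a w-set. onto_prob w n k is the probability that n independent
  uniform draws produce exactly the set S: the first draw must lie in S, and the remaining
  n - 1 draws must then cover S or S minus the first element.\<close>

fun onto_prob :: "nat \<Rightarrow> nat \<Rightarrow> nat \<Rightarrow> real" where
  "onto_prob w 0 k = (if k = 0 then 1 else 0)"
| "onto_prob w (Suc n) k = real k / real w * (onto_prob w n k + onto_prob w n (k - 1))"

text \<open>occupation w k is the closed form of the series over n of onto_prob w n k, i.e. the
  expected number of times at which the set of drawn elements equals a fixed k-set (k < w).\<close>

definition occupation :: "nat \<Rightarrow> nat \<Rightarrow> real" where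
  "occupation w k = real w / (real (w - k) * real (w choose k))"

lemma onto_prob_nonneg: "0 \<le> onto_prob w n k"
  by (induction n arbitrary: k) auto

lemma occupation_nonneg: "0 \<le> occupation w k"
  by (simp add: occupation_def)

lemma occupation_0: "w > 0 \<Longrightarrow> occupation w 0 = 1"
  by (simp add: occupation_def)

text \<open>The recursion satisfied by the occupation values; it is the identity
  (k+1) C(w,k+1) = (w-k) C(w,k) in disguise.\<close>

lemma occupation_Suc:
  assumes "Suc k < w"
  shows "real (w - Suc k) * occupation w (Suc k) = real (Suc k) * occupation w k"
proof -
  have binom: "real (Suc k) * real (w choose Suc k) = real (w - k) * real (w choose k)"
    using binomial_absorption[of k w] binomial_absorb_comp[of w k] by (metis of_nat_mult)
  have "real (w choose Suc k) > 0" "real (w - Suc k) > 0"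
    using assms by auto
  then have "real (w - Suc k) * occupation w (Suc k) = real w / real (w choose Suc k)"
    by (simp add: occupation_def)
  also have "\<dots> = real (Suc k) * (real w / (real (Suc k) * real (w choose Suc k)))"
    by simp
  also have "\<dots> = real (Suc k) * occupation w k"
    by (simp only: binom occupation_def mult.commute)
  finally show ?thesis .
qed

lemma onto_prob_partial_sum_Suc:
  "(\<Sum>n<Suc N. onto_prob w n k) = (if k = 0 then 1 else 0)
     + real k / real w * ((\<Sum>n<N. onto_prob w n k) + (\<Sum>n<N. onto_prob w n (k - 1)))"
proof -
  have "(\<Sum>n<Suc N. onto_prob w n k) = onto_prob w 0 k + (\<Sum>n<N. onto_prob w (Suc n) k)"
    by (rule sum.lessThan_Suc_shift)
  also have "(\<Sum>n<N. onto_prob w (Suc n) k)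
      = real k / real w * (\<Sum>n<N. onto_prob w n k + onto_prob w n (k - 1))"
    by (simp add: sum_distrib_left)
  finally show ?thesis
    by (simp add: sum.distrib)
qed

lemma onto_prob_partial_sum_le:
  "k < w \<Longrightarrow> (\<Sum>n<N. onto_prob w n k) \<le> occupation w k"
proof (induction k arbitrary: N)
  case 0
  then show ?case
    by (cases N) (simp_all add: occupation_0 onto_prob_partial_sum_Suc del: sum.lessThan_Suc)
next
  case (Suc k)
  show ?case
  proof (cases N)
    case 0
    then show ?thesis by (simp add: occupation_nonneg)
  next
    case (Suc M)
    let ?s = "\<Sum>n<Suc M. onto_prob w n (Suc k)"
    have IH: "(\<Sum>n<M. onto_prob w n k) \<le> occupation w k"
      using Suc.IH Suc.prems by simp
    have "?s = real (Suc k) / real w * ((\<Sum>n<M. onto_prob w n (Suc k)) + (\<Sum>n<M. onto_prob w n k))"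
      by (simp only: onto_prob_partial_sum_Suc) simp
    also have "\<dots> \<le> real (Suc k) / real w * (?s + occupation w k)"
      using onto_prob_nonneg[of w M "Suc k"] by (intro mult_left_mono add_mono IH) auto
    finally have "real w * ?s \<le> real (Suc k) * (?s + occupation w k)"
      using Suc.prems by (simp add: field_simps)
    then have "real (w - Suc k) * ?s \<le> real (w - Suc k) * occupation w (Suc k)"
      using Suc.prems occupation_Suc[OF Suc.prems] by (simp add: algebra_simps)
    then show ?thesis
      using Suc Suc.prems by simp
  qed
qed

text \<open>Summing the recursion of onto_prob over all n gives a linear equation for the series at
  k+1 in terms of the series at k, whose unique solution is the occupation value.\<close>

lemma onto_prob_sums: "k < w \<Longrightarrow> (\<lambda>n. onto_prob w n k) sums occupation w k"
proof (induction k)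
  case 0
  have "(\<lambda>n. onto_prob w n 0) sums (\<Sum>n\<in>{0}. onto_prob w n 0)"
    by (rule sums_finite) (auto elim: onto_prob.elims simp: gr0_conv_Suc)
  then show ?case using 0 by (simp add: occupation_0)
next
  case (Suc k)
  have "summable (\<lambda>n. onto_prob w n (Suc k))"
    using Suc.prems onto_prob_nonneg onto_prob_partial_sum_le
    by (intro summableI_nonneg_bounded[where x = "occupation w (Suc k)"]) auto
  then obtain L where L: "(\<lambda>n. onto_prob w n (Suc k)) sums L"
    by (auto simp: summable_def)
  have IH: "(\<lambda>n. onto_prob w n k) sums occupation w k"
    using Suc by simp
  have "(\<lambda>n. onto_prob w (Suc n) (Suc k)) sums (real (Suc k) / real w * (L + occupation w k))"
    unfolding onto_prob.simps by (intro sums_mult sums_add) (use L IH in simp_all)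
  moreover have "(\<lambda>n. onto_prob w (Suc n) (Suc k)) sums L"
    using L by (subst sums_Suc_iff) simp
  ultimately have "L = real (Suc k) / real w * (L + occupation w k)"
    using sums_unique2 by blast
  then have "real (w - Suc k) * L = real (w - Suc k) * occupation w (Suc k)"
    using Suc.prems occupation_Suc[OF Suc.prems] by (simp add: field_simps)
  then show ?case
    using L Suc.prems by simp
qed

definition words :: "'a set \<Rightarrow> nat \<Rightarrow> 'a list set" where
  "words W n = {xs. set xs \<subseteq> W \<and> length xs = n}"

lemma words_0: "words W 0 = {[]}"
  unfolding words_def by auto

lemma sum_words_Suc:
  assumes "finite W"
  shows "(\<Sum>xs\<in>words W (Suc n). g xs) = (\<Sum>x\<in>W. \<Sum>xs\<in>words W n. g (x # xs))"
proof -
  have "(\<Sum>xs\<in>words W (Suc n). g xs) = (\<Sum>p\<in>words W n \<times> W. g (snd p # fst p))"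
    unfolding words_def lists_length_Suc_eq
    by (subst sum.reindex) (auto simp: inj_split_Cons intro!: sum.cong)
  also have "\<dots> = (\<Sum>xs\<in>words W n. \<Sum>x\<in>W. g (x # xs))"
    by (simp add: sum.cartesian_product split_def)
  also have "\<dots> = (\<Sum>x\<in>W. \<Sum>xs\<in>words W n. g (x # xs))"
    by (rule sum.swap)
  finally show ?thesis .
qed

definition image_count :: "'a set \<Rightarrow> nat \<Rightarrow> 'a set \<Rightarrow> real" where
  "image_count W n S = (\<Sum>xs\<in>words W n. if set xs = S then 1 else 0)"

lemma image_count_eq:
  assumes fin: "finite W" and "S \<subseteq> W"
  shows "image_count W n S = onto_prob (card W) n (card S) * real (card W) ^ n"
  using \<open>S \<subseteq> W\<close>
proof (induction n arbitrary: S)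
  case 0
  then have "finite S" using fin finite_subset by blast
  then show ?case by (auto simp: image_count_def words_0)
next
  case (Suc n)
  have finS: "finite S" using Suc.prems fin finite_subset by blast
  have split: "(if insert x T = S then 1 else 0 :: real)
      = (if x \<in> S then (if T = S then 1 else 0) + (if T = S - {x} then 1 else 0) else 0)" for x T
    by auto
  have "image_count W (Suc n) S
      = (\<Sum>x\<in>W. \<Sum>xs\<in>words W n. if insert x (set xs) = S then 1 else 0)"
    unfolding image_count_def by (simp add: sum_words_Suc[OF fin])
  also have "\<dots> = (\<Sum>x\<in>W. if x \<in> S then image_count W n S + image_count W n (S - {x}) else 0)"
    unfolding split image_count_def by (auto intro!: sum.cong simp: sum.distrib)
  also have "\<dots> = (\<Sum>x\<in>S. image_count W n S + image_count W n (S - {x}))"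
    using Suc.prems by (simp add: sum.inter_restrict[OF fin, symmetric] Int_absorb1)
  also have "\<dots> = (\<Sum>x\<in>S. (onto_prob (card W) n (card S) + onto_prob (card W) n (card S - 1))
                           * real (card W) ^ n)"
  proof (intro sum.cong refl)
    fix x assume "x \<in> S"
    then have "image_count W n (S - {x}) = onto_prob (card W) n (card S - 1) * real (card W) ^ n"
      using Suc.IH[of "S - {x}"] Suc.prems finS by (auto simp: card_Diff_singleton)
    then show "image_count W n S + image_count W n (S - {x})
        = (onto_prob (card W) n (card S) + onto_prob (card W) n (card S - 1)) * real (card W) ^ n"
      using Suc.IH[OF Suc.prems] by (simp add: algebra_simps)
  qed
  also have "\<dots> = onto_prob (card W) (Suc n) (card S) * real (card W) ^ Suc n"
    using fin Suc.prems by (cases "W = {}") auto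
  finally show ?case .
qed

text \<open>The draws range over an arbitrary type, so a function of the first m draws need not be
  measurable.\<close>

lemma measurable_stake_factor:
  fixes c :: "'a \<Rightarrow> 'b::countable" and F :: "'a list \<Rightarrow> ennreal"
  assumes c: "c \<in> measurable M (count_space UNIV)"
    and factor: "\<And>xs ys. map c xs = map c ys \<Longrightarrow> F xs = F ys"
  shows "(\<lambda>\<omega>. F (stake m \<omega>)) \<in> borel_measurable (stream_space M)"
proof -
  define g where "g zs = F (SOME xs. map c xs = zs)" for zs
  have "F xs = g (map c xs)" for xs
    unfolding g_def by (rule factor) (metis (mono_tags) someI)
  then have F: "(\<lambda>\<omega>. F (stake m \<omega>)) = (\<lambda>\<omega>. g (stake m (smap c \<omega>)))"
    by simp
  have "smap c \<in> measurable (stream_space M) (stream_space (count_space UNIV))"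
    by (rule measurable_smap[OF c])
  then have "(\<lambda>\<omega>. stake m (smap c \<omega>)) \<in> measurable (stream_space M) (count_space UNIV)"
    by (rule measurable_compose) (rule measurable_stake)
  then show ?thesis
    unfolding F by (rule measurable_compose) simp
qed

lemma prob_space_draws: "prob_space (draws W)"
  unfolding draws_def by (rule prob_space.prob_space_stream_space[OF prob_space_measure_pmf])

text \<open>The expectation of a function of the first n draws is its average over all words of
  length n; the prefix ys makes the induction over n go through.\<close>

lemma nn_integral_stake:
  assumes fin: "finite W" and ne: "W \<noteq> {}"
    and nonneg: "\<And>xs. 0 \<le> F xs"
    and meas: "\<And>ys m. (\<lambda>\<omega>. ennreal (F (ys @ stake m \<omega>))) \<in> borel_measurable (draws W)"
  shows "(\<integral>\<^sup>+\<omega>. ennreal (F (ys @ stake n \<omega>)) \<partial>draws W)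
     = ennreal ((\<Sum>xs\<in>words W n. F (ys @ xs)) / real (card W) ^ n)"
proof (induction n arbitrary: ys)
  case 0
  interpret prob_space "draws W" by (rule prob_space_draws)
  show ?case by (simp add: words_0 emeasure_space_1)
next
  case (Suc n)
  have wpos: "real (card W) > 0" using fin ne by (simp add: card_gt_0_iff)
  have "(\<integral>\<^sup>+\<omega>. ennreal (F (ys @ stake (Suc n) \<omega>)) \<partial>draws W)
     = (\<integral>\<^sup>+x. (\<integral>\<^sup>+\<omega>. ennreal (F ((ys @ [x]) @ stake n \<omega>)) \<partial>draws W) \<partial>measure_pmf (pmf_of_set W))"
    using meas[of ys "Suc n"] unfolding draws_def
    by (subst prob_space.nn_integral_stream_space[OF prob_space_measure_pmf]) simp_all
  also have "\<dots> = (\<Sum>x\<in>W. ennreal ((\<Sum>xs\<in>words W n. F ((ys @ [x]) @ xs)) / real (card W) ^ n))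
                  / of_nat (card W)"
    by (simp only: Suc.IH nn_integral_pmf_of_set[OF ne fin])
  also have "\<dots> = ennreal ((\<Sum>x\<in>W. (\<Sum>xs\<in>words W n. F ((ys @ [x]) @ xs)) / real (card W) ^ n)
                           / real (card W))"
    by (subst sum_ennreal)
      (auto simp: nonneg sum_nonneg ennreal_of_nat_eq_real_of_nat intro!: divide_ennreal wpos)
  also have "(\<Sum>x\<in>W. (\<Sum>xs\<in>words W n. F ((ys @ [x]) @ xs)) / real (card W) ^ n) / real (card W)
      = (\<Sum>xs\<in>words W (Suc n). F (ys @ xs)) / real (card W) ^ Suc n"
    by (simp add: sum_words_Suc[OF fin] sum_divide_distrib[symmetric])
  finally show ?case .
qed

text \<open>survives W G h n xs is 1 iff no prefix of xs of length at most n is a transversal; for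
  the draws this is the indicator of the event T > n.\<close>

definition survives :: "'a set \<Rightarrow> (nat \<Rightarrow> 'a set) \<Rightarrow> nat \<Rightarrow> nat \<Rightarrow> 'a list \<Rightarrow> real" where
  "survives W G h n xs = (if \<forall>m\<le>n. \<not> is_transversal W G h (set (take m xs)) then 1 else 0)"

definition non_transversals :: "'a set \<Rightarrow> (nat \<Rightarrow> 'a set) \<Rightarrow> nat \<Rightarrow> 'a set set" where
  "non_transversals W G h = {S. S \<subseteq> W \<and> \<not> is_transversal W G h S}"

lemma finite_non_transversals: "finite W \<Longrightarrow> finite (non_transversals W G h)"
  unfolding non_transversals_def by (rule finite_subset[of _ "Pow W"]) auto

text \<open>W itself is a transversal, so every non-transversal is a proper subset of W.\<close>

lemma card_non_transversal_less:
  assumes "finite W" and G: "\<forall>i\<in>{1..h}. G i \<noteq> {} \<and> G i \<subseteq> W"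
    and "S \<in> non_transversals W G h"
  shows "card S < card W"
proof -
  have "is_transversal W G h W"
    using G unfolding is_transversal_def by auto
  then have "S \<subset> W"
    using assms(3) unfolding non_transversals_def by auto
  then show ?thesis
    using assms(1) by (rule psubset_card_mono[rotated])
qed

lemma transversal_mono:
  "is_transversal W G h X \<Longrightarrow> X \<subseteq> Y \<Longrightarrow> Y \<subseteq> W \<Longrightarrow> is_transversal W G h Y"
  unfolding is_transversal_def by blast

text \<open>On words over W, being a transversal is monotone along prefixes, so only the full word
  matters.\<close>

lemma survives_words:
  assumes "xs \<in> words W n"
  shows "survives W G h n xs = (if is_transversal W G h (set xs) then 0 else 1)"
proof -
  have sub: "set xs \<subseteq> W" and len: "length xs = n"
    using assms unfolding words_def by auto
  have "(\<forall>m\<le>n. \<not> is_transversal W G h (set (take m xs))) \<longleftrightarrow> \<not> is_transversal W G h (set xs)"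
    using len transversal_mono[OF _ set_take_subset sub] by (metis order_refl take_all)
  then show ?thesis
    unfolding survives_def by simp
qed

text \<open>The code of an element records whether it lies in W and which of the sets
  G 1, ..., G h contain it; this is all that transversality depends on.\<close>

definition membership_code :: "'a set \<Rightarrow> (nat \<Rightarrow> 'a set) \<Rightarrow> nat \<Rightarrow> 'a \<Rightarrow> bool \<times> nat list" where
  "membership_code W G h x = (x \<in> W, filter (\<lambda>i. x \<in> G i) [1..<Suc h])"

lemma is_transversal_code:
  "is_transversal W G h (set xs) \<longleftrightarrow>
     (\<forall>z\<in>set (map (membership_code W G h) xs). fst z) \<and>
     (\<forall>i\<in>{1..h}. \<exists>z\<in>set (map (membership_code W G h) xs). i \<in> set (snd z))"
proof -
  have groups: "set (snd (membership_code W G h x)) = {i. 1 \<le> i \<and> i \<le> h \<and> x \<in> G i}" for x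
    unfolding membership_code_def by auto
  show ?thesis
    unfolding is_transversal_def by (auto simp: groups) (auto simp: membership_code_def)
qed

text \<open>Survival depends on the draws only through their codes, hence is measurable.\<close>

lemma survives_measurable:
  "(\<lambda>\<omega>. ennreal (survives W G h n (ys @ stake m \<omega>))) \<in> borel_measurable (draws W)"
  unfolding draws_def
proof (rule measurable_stake_factor[where c = "membership_code W G h"])
  fix xs zs :: "'a list"
  assume "map (membership_code W G h) xs = map (membership_code W G h) zs"
  then have "map (membership_code W G h) (take k (ys @ xs)) = map (membership_code W G h) (take k (ys @ zs))"
    for k by (simp add: take_map[symmetric])
  then show "ennreal (survives W G h n (ys @ xs)) = ennreal (survives W G h n (ys @ zs))"
    unfolding survives_def by (simp only: is_transversal_code)
qed simp

text \<open>The tail-sum formula, pointwise: T equals the number of n with T > n.\<close>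

lemma hitting_time_eq_suminf:
  "hitting_time W G h \<omega> = (\<Sum>n. ennreal (survives W G h n (stake n \<omega>)))"
proof -
  let ?T = "\<lambda>n. is_transversal W G h (set (stake n \<omega>))"
  have surv: "survives W G h n (stake n \<omega>) = (if \<forall>m\<le>n. \<not> ?T m then 1 else 0)" for n
    unfolding survives_def by (simp add: take_stake min_absorb1 cong: all_cong)
  show ?thesis
  proof (cases "\<exists>n. ?T n")
    case True
    define L where "L = (LEAST n. ?T n)"
    have "?T L"
      unfolding L_def by (rule LeastI_ex[OF True])
    then have before: "(\<forall>m\<le>n. \<not> ?T m) \<longleftrightarrow> n < L" for n
      using not_less_Least[of _ ?T] unfolding L_def[symmetric] by (meson le_less_trans not_le)
    have "(\<Sum>n. ennreal (survives W G h n (stake n \<omega>))) = (\<Sum>n<L. ennreal (survives W G h n (stake n \<omega>)))"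
      by (rule suminf_finite) (auto simp: surv before)
    also have "\<dots> = of_nat L"
      by (simp add: surv before)
    finally show ?thesis
      using True unfolding hitting_time_def L_def by simp
  next
    case False
    then have "(\<lambda>n. ennreal (survives W G h n (stake n \<omega>))) = (\<lambda>n. 1)"
      by (simp add: surv)
    moreover have "(\<Sum>n. ennreal 1) = \<infinity>"
      unfolding infinity_ennreal_def by (rule summable_iff_suminf_neq_top) (auto simp: summable_const_iff)
    ultimately show ?thesis
      using False unfolding hitting_time_def by simp
  qed
qed

text \<open>A word of length n survives iff its image is a non-transversal; group the words by
  their image.\<close>

lemma sum_survives:
  assumes "finite W"
  shows "(\<Sum>xs\<in>words W n. survives W G h n xs) = (\<Sum>S\<in>non_transversals W G h. image_count W n S)"
proof -
  have "(\<Sum>xs\<in>words W n. survives W G h n xs)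
      = (\<Sum>xs\<in>words W n. \<Sum>S\<in>non_transversals W G h. if set xs = S then 1 else 0)"
  proof (intro sum.cong refl)
    fix xs assume xs: "xs \<in> words W n"
    then have "set xs \<subseteq> W" unfolding words_def by auto
    then show "survives W G h n xs = (\<Sum>S\<in>non_transversals W G h. if set xs = S then 1 else 0)"
      using finite_non_transversals[OF assms]
      by (simp add: survives_words[OF xs] sum.delta' non_transversals_def)
  qed
  also have "\<dots> = (\<Sum>S\<in>non_transversals W G h. image_count W n S)"
    unfolding image_count_def by (rule sum.swap)
  finally show ?thesis .
qed

lemma survival_probability:
  assumes fin: "finite W" and ne: "W \<noteq> {}"
  shows "(\<integral>\<^sup>+\<omega>. ennreal (survives W G h n (stake n \<omega>)) \<partial>draws W)
     = ennreal (\<Sum>S\<in>non_transversals W G h. onto_prob (card W) n (card S))"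
proof -
  have wpos: "real (card W) > 0"
    using fin ne by (simp add: card_gt_0_iff)
  have "(\<integral>\<^sup>+\<omega>. ennreal (survives W G h n ([] @ stake n \<omega>)) \<partial>draws W)
      = ennreal ((\<Sum>xs\<in>words W n. survives W G h n ([] @ xs)) / real (card W) ^ n)"
    by (rule nn_integral_stake[OF fin ne _ survives_measurable]) (simp add: survives_def)
  also have "(\<Sum>xs\<in>words W n. survives W G h n ([] @ xs))
      = (\<Sum>S\<in>non_transversals W G h. onto_prob (card W) n (card S) * real (card W) ^ n)"
    unfolding append_Nil sum_survives[OF fin]
    by (rule sum.cong) (auto simp: non_transversals_def image_count_eq[OF fin])
  finally show ?thesis
    using wpos by (simp add: sum_divide_distrib)
qed

lemma expected_hitting_time:
  assumes fin: "finite W" and ne: "W \<noteq> {}" and G: "\<forall>i\<in>{1..h}. G i \<noteq> {} \<and> G i \<subseteq> W"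
  shows "(\<integral>\<^sup>+\<omega>. hitting_time W G h \<omega> \<partial>draws W)
     = ennreal (\<Sum>S\<in>non_transversals W G h. occupation (card W) (card S))"
proof -
  let ?p = "\<lambda>n. \<Sum>S\<in>non_transversals W G h. onto_prob (card W) n (card S)"
  have sums: "?p sums (\<Sum>S\<in>non_transversals W G h. occupation (card W) (card S))"
    by (intro sums_sum onto_prob_sums card_non_transversal_less[OF fin G])
  have "(\<integral>\<^sup>+\<omega>. hitting_time W G h \<omega> \<partial>draws W)
      = (\<Sum>n. \<integral>\<^sup>+\<omega>. ennreal (survives W G h n (stake n \<omega>)) \<partial>draws W)"
    unfolding hitting_time_eq_suminf
    by (rule nn_integral_suminf) (use survives_measurable[of W G h _ "[]"] in simp)
  also have "\<dots> = (\<Sum>n. ennreal (?p n))"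
    by (simp only: survival_probability[OF fin ne])
  also have "\<dots> = ennreal (\<Sum>n. ?p n)"
    by (rule suminf_ennreal2) (auto intro: sum_nonneg onto_prob_nonneg sums_summable[OF sums])
  finally show ?thesis
    using sums_unique[OF sums] by simp
qed

lemma card_non_transversals_of_size:
  assumes fin: "finite W"
  shows "real (card {S \<in> non_transversals W G h. card S = k}) = real (card W choose k) - real (tau W G h k)"
proof -
  let ?N = "{S \<in> non_transversals W G h. card S = k}" and ?T = "{X. is_transversal W G h X \<and> card X = k}"
  have split: "{B. B \<subseteq> W \<and> card B = k} = ?N \<union> ?T"
    unfolding non_transversals_def is_transversal_def by auto
  have "finite ?N"
    using finite_non_transversals[OF fin] by simp
  moreover have "finite ?T"
    by (rule finite_subset[of _ "Pow W"]) (use fin in \<open>auto simp: is_transversal_def\<close>)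
  ultimately have "card W choose k = card ?N + tau W G h k"
    unfolding n_subsets[OF fin, symmetric] split tau_def
    by (rule card_Un_disjoint) (auto simp: non_transversals_def)
  then show ?thesis by simp
qed

lemma sum_occupation_non_transversals:
  assumes fin: "finite W" and G: "\<forall>i\<in>{1..h}. G i \<noteq> {} \<and> G i \<subseteq> W"
  defines "w \<equiv> card W"
  shows "(\<Sum>S\<in>non_transversals W G h. occupation w (card S))
       = real w * (\<Sum>k<w. (1 - qprob W G h k) / real (w - k))"
proof -
  have "(\<Sum>S\<in>non_transversals W G h. occupation w (card S))
      = (\<Sum>k<w. \<Sum>S\<in>{S \<in> non_transversals W G h. card S = k}. occupation w (card S))"
    unfolding w_def using finite_non_transversals[OF fin] card_non_transversal_less[OF fin G]
    by (intro sum.group[symmetric]) auto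
  also have "\<dots> = (\<Sum>k<w. (real (w choose k) - real (tau W G h k)) * occupation w k)"
    unfolding w_def by (simp add: card_non_transversals_of_size[OF fin])
  also have "\<dots> = (\<Sum>k<w. real w * ((1 - qprob W G h k) / real (w - k)))"
  proof (intro sum.cong refl)
    fix k assume "k \<in> {..<w}"
    then have "real (w choose k) > 0" "real (w - k) > 0" by auto
    then show "(real (w choose k) - real (tau W G h k)) * occupation w k
        = real w * ((1 - qprob W G h k) / real (w - k))"
      unfolding occupation_def qprob_def w_def by (simp add: field_simps)
  qed
  finally show ?thesis
    by (simp add: sum_distrib_left)
qed

lemma harm_reversed: "(\<Sum>k<n. 1 / real (n - k)) = harm n"
proof (induction n)
  case 0
  then show ?case by (simp add: harm_def)
next
  case (Suc n)
  have "(\<Sum>k<Suc n. 1 / real (Suc n - k)) = 1 / real (Suc n) + (\<Sum>k<n. 1 / real (n - k))"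
    by (subst sum.lessThan_Suc_shift) simp
  then show ?case
    using Suc by (simp add: harm_Suc field_simps)
qed

text \<open>Since h >= 1, the empty set is not a transversal.\<close>

lemma tau_0:
  assumes "finite W" and "h \<ge> 1"
  shows "tau W G h 0 = 0"
proof -
  have "\<not> is_transversal W G h {}"
    using assms(2) unfolding is_transversal_def by auto
  moreover have "X = {}" if "is_transversal W G h X" "card X = 0" for X
    using that assms(1) finite_subset unfolding is_transversal_def by fastforce
  ultimately show ?thesis
    unfolding tau_def by (metis (mono_tags, lifting) card.empty empty_Collect_eq)
qed

text \<open>w q_k / (w - k) = tau_k / C(w-1,k), using (w-k) C(w,k) = w C(w-1,k).\<close>

lemma scaled_qprob:
  assumes "k < card W"
  shows "real (card W) * (qprob W G h k / real (card W - k))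
       = real (tau W G h k) / real (card W - 1 choose k)"
proof -
  have binom: "real (card W - k) * real (card W choose k) = real (card W) * real (card W - 1 choose k)"
    using binomial_absorb_comp[of "card W" k] by (metis of_nat_mult)
  have "real (card W - k) > 0" "real (card W - 1 choose k) > 0" "real (card W choose k) > 0"
    using assms by auto
  with binom show ?thesis
    unfolding qprob_def by (simp add: field_simps)
qed

text \<open>The main theorem: the first identity is the expectation computed above; the other
  two are rearrangements using q_0 = 0, the harmonic numbers and scaled_qprob.\<close>

theorem theorem1:
  fixes W :: "'a set" and G :: "nat \<Rightarrow> 'a set" and h :: nat
  assumes "finite W" and "card W \<ge> 1"
    and "h \<ge> 1"
    and "\<forall>i\<in>{1..h}. G i \<noteq> {} \<and> G i \<subseteq> W"
  defines "w \<equiv> card W"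
  shows "(\<integral>\<^sup>+ \<omega>. hitting_time W G h \<omega> \<partial>draws W)
           = ennreal (real w * (\<Sum>k<w. (1 - qprob W G h k) / real (w - k)))
       \<and> real w * (\<Sum>k<w. (1 - qprob W G h k) / real (w - k))
           = real w * (harm w - (\<Sum>k=1..w-1. qprob W G h k / real (w - k)))
       \<and> real w * (harm w - (\<Sum>k=1..w-1. qprob W G h k / real (w - k)))
           = real w * harm w - (\<Sum>k=1..w-1. real (tau W G h k) / real (w - 1 choose k))"
proof (intro conjI)
  note fin = assms(1) and G = assms(4)
  have ne: "W \<noteq> {}"
    using assms(2) by auto
  show "(\<integral>\<^sup>+ \<omega>. hitting_time W G h \<omega> \<partial>draws W)
      = ennreal (real w * (\<Sum>k<w. (1 - qprob W G h k) / real (w - k)))"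
    unfolding w_def expected_hitting_time[OF fin ne G] sum_occupation_non_transversals[OF fin G] ..
  have "qprob W G h 0 = 0"
    unfolding qprob_def by (simp add: tau_0[OF fin assms(3)])
  moreover have "{..<w} = insert 0 {1..w-1}"
    using assms(2) w_def by auto
  ultimately have q_sum: "(\<Sum>k<w. qprob W G h k / real (w - k))
      = (\<Sum>k=1..w-1. qprob W G h k / real (w - k))"
    by simp
  have "(\<Sum>k<w. (1 - qprob W G h k) / real (w - k))
      = (\<Sum>k<w. 1 / real (w - k)) - (\<Sum>k<w. qprob W G h k / real (w - k))"
    by (simp only: diff_divide_distrib sum_subtractf)
  also have "\<dots> = harm w - (\<Sum>k=1..w-1. qprob W G h k / real (w - k))"
    by (simp only: harm_reversed q_sum)
  finally show "real w * (\<Sum>k<w. (1 - qprob W G h k) / real (w - k))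
      = real w * (harm w - (\<Sum>k=1..w-1. qprob W G h k / real (w - k)))"
    by (simp only:)
  have "real w * (\<Sum>k=1..w-1. qprob W G h k / real (w - k))
      = (\<Sum>k=1..w-1. real (tau W G h k) / real (w - 1 choose k))"
    unfolding sum_distrib_left w_def using assms(2) by (intro sum.cong refl scaled_qprob) auto
  then show "real w * (harm w - (\<Sum>k=1..w-1. qprob W G h k / real (w - k)))
      = real w * harm w - (\<Sum>k=1..w-1. real (tau W G h k) / real (w - 1 choose k))"
    by (simp add: right_diff_distrib)
qed

end
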